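(* Let $w>1$, $h_v(x)=\tanh(w\cdot x+v)$ and $g_v(x)=x-h_v(x)$ for $v\in\mathbb{R}$. Let $v_-,v_+$ be the unique reals such that $g_{v_-}$ vanishes at its local maximum point and $g_{v_+}$ vanishes at its local minimum point, and define the pivots $p_-=p_-^{v_-}$ and $p_+=p_+^{v_+}$. Then for every $v\in\mathbb{R}$, the function $h_v$ has one, two, or three fixpoints, all lying in $[-1,1]$, and: (1) if $h_v$ has exactly one fixpoint $x_1$, then $x_1\le p_-$ or $p_+\le x_1$; (2) if $h_v$ has exactly two fixpoints $x_1<x_3$, then $x_1\le p_-<p_+\le x_3$; (3) if $h_v$ has exactly three fixpoints $x_1<x_2<x_3$, then $x_1\le p_-<x_2<p_+\le x_3$.
   Context: For $w>1$, each $g_v$ has exactly two stationary points, the smaller one $p_-^v$ a local maximum and the larger one $p_+^v$ a local minimum; the values $v_-,v_+$ exist, are unique, and satisfy $v_+<v_-$. *)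

theory Defs
  imports Complex_Main
begin

definition h :: "real \<Rightarrow> real \<Rightarrow> real \<Rightarrow> real" where
  "h w v x = tanh (w * x + v)"

definition g :: "real \<Rightarrow> real \<Rightarrow> real \<Rightarrow> real" where
  "g w v x = x - h w v x"

definition loc_max_pt :: "(real \<Rightarrow> real) \<Rightarrow> real \<Rightarrow> bool" where
  "loc_max_pt f x \<longleftrightarrow> (\<exists>e>0. \<forall>y. dist y x < e \<longrightarrow> f y \<le> f x)"

definition loc_min_pt :: "(real \<Rightarrow> real) \<Rightarrow> real \<Rightarrow> bool" where
  "loc_min_pt f x \<longleftrightarrow> (\<exists>e>0. \<forall>y. dist y x < e \<longrightarrow> f x \<le> f y)"

definition p_minus_v :: "real \<Rightarrow> real \<Rightarrow> real" where
  "p_minus_v w v = (THE x. loc_max_pt (g w v) x)"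

definition p_plus_v :: "real \<Rightarrow> real \<Rightarrow> real" where
  "p_plus_v w v = (THE x. loc_min_pt (g w v) x)"

definition v_minus :: "real \<Rightarrow> real" where
  "v_minus w = (THE v. g w v (p_minus_v w v) = 0)"

definition v_plus :: "real \<Rightarrow> real" where
  "v_plus w = (THE v. g w v (p_plus_v w v) = 0)"

definition pivot_minus :: "real \<Rightarrow> real" where
  "pivot_minus w = p_minus_v w (v_minus w)"

definition pivot_plus :: "real \<Rightarrow> real" where
  "pivot_plus w = p_plus_v w (v_plus w)"

definition fixpoints :: "real \<Rightarrow> real \<Rightarrow> real set" where
  "fixpoints w v = {x. h w v x = x}"

end

theory Submission
  imports Defs
begin

text \<open>
  Since g_v' x = 1 - w (1 - tanh^2 (w x + v)) and w > 1, the derivative vanishes exactly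
  where tanh (w x + v) = \<plusminus>c with c = sqrt (1 - 1/w); so g_v increases up to p_-^v,
  decreases on [p_-^v, p_+^v] and increases afterwards, and g_v has at most one zero on each
  of these pieces. At a fixpoint x we have x = tanh (w x + v), hence x \<le> p_-^v iff
  x \<le> -c and x \<ge> p_+^v iff x \<ge> c: the pieces are cut out by the pivots -c and c,
  independently of v. A zero in the middle piece forces g_v (p_-^v) > 0 > g_v (p_+^v), and
  since g_v (-1) < 0 < g_v 1 the intermediate value theorem yields zeros on both outer pieces.
\<close>

definition crit_val :: "real \<Rightarrow> real" where
  "crit_val w = sqrt (1 - 1 / w)"

definition crit_arg :: "real \<Rightarrow> real" where
  "crit_arg w = artanh (crit_val w)"

definition lmax_pt :: "real \<Rightarrow> real \<Rightarrow> real" where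
  "lmax_pt w v = (- crit_arg w - v) / w"

definition lmin_pt :: "real \<Rightarrow> real \<Rightarrow> real" where
  "lmin_pt w v = (crit_arg w - v) / w"

subsection \<open>Sets split into three pieces by two cut points\<close>

lemma finite_card_le_1_if_subsingleton:
  assumes "\<And>x y. x \<in> S \<Longrightarrow> y \<in> S \<Longrightarrow> x = y"
  shows "finite S \<and> card S \<le> 1"
proof -
  have "S = {} \<or> (\<exists>x. S = {x})" using assms by blast
  then show ?thesis by auto
qed

locale at_most_one_per_piece =
  fixes F :: "'a::linorder set" and p q :: 'a
  assumes unique_le: "\<And>x y. x \<in> F \<Longrightarrow> y \<in> F \<Longrightarrow> x \<le> p \<Longrightarrow> y \<le> p \<Longrightarrow> x = y"
    and unique_between: "\<And>x y. x \<in> F \<Longrightarrow> y \<in> F \<Longrightarrow> p < x \<Longrightarrow> x < q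
      \<Longrightarrow> p < y \<Longrightarrow> y < q \<Longrightarrow> x = y"
    and unique_ge: "\<And>x y. x \<in> F \<Longrightarrow> y \<in> F \<Longrightarrow> q \<le> x \<Longrightarrow> q \<le> y \<Longrightarrow> x = y"
begin

lemma finite_card_le_3: "finite F \<and> card F \<le> 3"
proof -
  define L M R where "L = F \<inter> {..p}" and "M = F \<inter> {p<..<q}" and "R = F \<inter> {q..}"
  have "finite L \<and> card L \<le> 1"
    by (rule finite_card_le_1_if_subsingleton) (auto simp: L_def intro: unique_le)
  moreover have "finite M \<and> card M \<le> 1"
    by (rule finite_card_le_1_if_subsingleton) (auto simp: M_def intro: unique_between)
  moreover have "finite R \<and> card R \<le> 1"
    by (rule finite_card_le_1_if_subsingleton) (auto simp: R_def intro: unique_ge)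
  moreover have F: "F = L \<union> M \<union> R"
    unfolding L_def M_def R_def by auto
  moreover have "card F \<le> card L + card M + card R"
    unfolding F by (metis card_Un_le add_le_mono le_trans order_refl)
  ultimately show ?thesis by auto
qed

end

locale middle_forces_outer = at_most_one_per_piece +
  assumes cuts_ordered: "p < q"
    and between_imp_outer: "\<And>x. x \<in> F \<Longrightarrow> p < x \<Longrightarrow> x < q
      \<Longrightarrow> (\<exists>y\<in>F. y \<le> p) \<and> (\<exists>y\<in>F. q \<le> y)"
begin

lemma singleton_position:
  assumes "F = {x}"
  shows "x \<le> p \<or> q \<le> x"
  using between_imp_outer[of x] assms by fastforce

lemma doubleton_position:
  assumes "F = {x, y}" and "x < y"
  shows "x \<le> p \<and> q \<le> y"
proof -
  have "x \<in> F" "y \<in> F" using assms(1) by auto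
  then have "\<not> y \<le> p" and "\<not> q \<le> x"
    using unique_le[of x y] unique_ge[of x y] assms(2)
    by (metis order.strict_trans1 order.strict_trans2 less_imp_le less_irrefl)+
  moreover have "\<not> (p < x \<and> x < q)" and "\<not> (p < y \<and> y < q)"
    using between_imp_outer[of x] between_imp_outer[of y] assms by fastforce+
  ultimately show ?thesis using cuts_ordered by auto
qed

lemma tripleton_position:
  assumes "F = {x, y, z}" and "x < y" and "y < z"
  shows "x \<le> p \<and> p < y \<and> y < q \<and> q \<le> z"
proof -
  have "x \<in> F" "y \<in> F" "z \<in> F" using assms(1) by auto
  then have "\<not> y \<le> p" and "\<not> q \<le> y"
    and "\<not> (p < x \<and> x < q \<and> p < y \<and> y < q)"
    and "\<not> (p < z \<and> z < q \<and> p < y \<and> y < q)"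
    using unique_le[of x y] unique_ge[of y z] unique_between[of x y] unique_between[of y z]
      assms(2,3) by (metis order.strict_trans1 order.strict_trans2 less_imp_le less_irrefl)+
  then show ?thesis using assms(2,3) by auto
qed

end

subsection \<open>The critical points of g\<close>

lemma tanh_artanh_real:
  assumes "-1 < (x::real)" "x < 1"
  shows "tanh (artanh x) = x"
proof -
  define y where "y = (1 + x) / (1 - x)"
  have y: "y > 0" using assms by (simp add: y_def)
  have "artanh x = ln (sqrt y)" using y by (simp add: artanh_def ln_sqrt y_def)
  then have "tanh (artanh x) = ((sqrt y)^2 - 1) / ((sqrt y)^2 + 1)"
    using y by (simp add: tanh_ln_real)
  also have "\<dots> = (y - 1) / (y + 1)" using y by simp
  also have "\<dots> = x" using assms unfolding y_def by (simp add: field_simps)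
  finally show ?thesis .
qed

lemma crit_val_bounds: "w > 1 \<Longrightarrow> 0 < crit_val w \<and> crit_val w < 1"
  unfolding crit_val_def by (auto simp: field_simps)

lemma tanh_crit_arg: "w > 1 \<Longrightarrow> tanh (crit_arg w) = crit_val w"
  unfolding crit_arg_def using crit_val_bounds[of w] by (intro tanh_artanh_real) auto

lemma crit_arg_pos: "w > 1 \<Longrightarrow> 0 < crit_arg w"
  using tanh_crit_arg[of w] crit_val_bounds[of w] tanh_real_pos_iff[of "crit_arg w"] by simp

lemma compare_affine_div_iff:
  fixes w z b v :: real
  assumes "w > 0"
  shows "z < (b - v) / w \<longleftrightarrow> w * z + v < b"
    and "(b - v) / w < z \<longleftrightarrow> b < w * z + v"
    and "z \<le> (b - v) / w \<longleftrightarrow> w * z + v \<le> b"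
    and "(b - v) / w \<le> z \<longleftrightarrow> b \<le> w * z + v"
    and "z = (b - v) / w \<longleftrightarrow> w * z + v = b"
  using assms by (simp_all add: field_simps)

lemma lmax_pt_less_lmin_pt: "w > 1 \<Longrightarrow> lmax_pt w v < lmin_pt w v"
  unfolding lmax_pt_def lmin_pt_def using crit_arg_pos[of w] by (simp add: divide_strict_right_mono)

lemma g_has_real_derivative:
  "(g w v has_real_derivative 1 - w * (1 - tanh (w * x + v) ^ 2)) (at x)"
  unfolding g_def[abs_def] h_def
  by (auto intro!: derivative_eq_intros simp: algebra_simps)

lemma continuous_on_g: "continuous_on S (g w v)"
  using g_has_real_derivative by (metis DERIV_isCont continuous_at_imp_continuous_on)

lemma g_slope_eq:
  assumes "w > 1"
  shows "1 - w * (1 - tanh u ^ 2) = w * (tanh u ^ 2 - crit_val w ^ 2)"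
proof -
  have "crit_val w ^ 2 = 1 - 1 / w" unfolding crit_val_def using assms by simp
  then show ?thesis using assms by (simp add: field_simps)
qed

lemma g_slope_pos_iff:
  assumes "w > 1"
  shows "0 < 1 - w * (1 - tanh u ^ 2) \<longleftrightarrow> crit_arg w < \<bar>u\<bar>"
proof -
  have "0 < 1 - w * (1 - tanh u ^ 2) \<longleftrightarrow> crit_val w ^ 2 < tanh u ^ 2"
    using assms by (simp add: g_slope_eq zero_less_mult_iff)
  also have "\<dots> \<longleftrightarrow> \<bar>crit_val w\<bar> < \<bar>tanh u\<bar>"
    using abs_le_square_iff[of "tanh u" "crit_val w"] by linarith
  also have "\<dots> \<longleftrightarrow> tanh (crit_arg w) < tanh \<bar>u\<bar>"
    using assms crit_val_bounds[of w] by (simp add: tanh_crit_arg)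
  also have "\<dots> \<longleftrightarrow> crit_arg w < \<bar>u\<bar>"
    by (simp only: tanh_real_less_iff)
  finally show ?thesis .
qed

lemma g_slope_neg_iff:
  assumes "w > 1"
  shows "1 - w * (1 - tanh u ^ 2) < 0 \<longleftrightarrow> \<bar>u\<bar> < crit_arg w"
proof -
  have "1 - w * (1 - tanh u ^ 2) < 0 \<longleftrightarrow> tanh u ^ 2 < crit_val w ^ 2"
    using assms by (simp add: g_slope_eq mult_less_0_iff)
  also have "\<dots> \<longleftrightarrow> \<bar>tanh u\<bar> < \<bar>crit_val w\<bar>"
    using abs_le_square_iff[of "crit_val w" "tanh u"] by linarith
  also have "\<dots> \<longleftrightarrow> tanh \<bar>u\<bar> < tanh (crit_arg w)"
    using assms crit_val_bounds[of w] by (simp add: tanh_crit_arg)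
  also have "\<dots> \<longleftrightarrow> \<bar>u\<bar> < crit_arg w"
    by (simp only: tanh_real_less_iff)
  finally show ?thesis .
qed

lemma g_slope_eq_0_iff:
  assumes "w > 1"
  shows "1 - w * (1 - tanh (w * x + v) ^ 2) = 0 \<longleftrightarrow> x = lmax_pt w v \<or> x = lmin_pt w v"
proof -
  let ?u = "w * x + v"
  have "1 - w * (1 - tanh ?u ^ 2) = 0 \<longleftrightarrow>
      \<not> 0 < 1 - w * (1 - tanh ?u ^ 2) \<and> \<not> 1 - w * (1 - tanh ?u ^ 2) < 0"
    by (auto simp: not_less)
  also have "\<dots> \<longleftrightarrow> \<not> crit_arg w < \<bar>?u\<bar> \<and> \<not> \<bar>?u\<bar> < crit_arg w"
    by (simp only: g_slope_pos_iff[OF assms] g_slope_neg_iff[OF assms])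
  also have "\<dots> \<longleftrightarrow> ?u = - crit_arg w \<or> ?u = crit_arg w"
    using crit_arg_pos[OF assms] by (auto simp: abs_if)
  also have "\<dots> \<longleftrightarrow> x = lmax_pt w v \<or> x = lmin_pt w v"
    unfolding lmax_pt_def lmin_pt_def using assms compare_affine_div_iff(5) by simp
  finally show ?thesis .
qed

lemma g_strict_mono_on_le_lmax_pt:
  assumes "w > 1"
  shows "strict_mono_on {..lmax_pt w v} (g w v)"
proof (rule strict_mono_onI)
  fix x y assume "x \<in> {..lmax_pt w v}" "y \<in> {..lmax_pt w v}" "x < y"
  show "g w v x < g w v y"
  proof (rule DERIV_pos_imp_increasing_open[OF \<open>x < y\<close> _ continuous_on_g])
    fix z assume "x < z" "z < y"
    then have "z < lmax_pt w v" using \<open>y \<in> _\<close> by simp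
    then have "w * z + v < - crit_arg w"
      using assms compare_affine_div_iff(1) unfolding lmax_pt_def by simp
    then have "crit_arg w < \<bar>w * z + v\<bar>" using crit_arg_pos[OF assms] by linarith
    then show "\<exists>l. DERIV (g w v) z :> l \<and> 0 < l"
      using g_has_real_derivative g_slope_pos_iff[OF assms] by blast
  qed
qed

lemma g_strict_mono_on_ge_lmin_pt:
  assumes "w > 1"
  shows "strict_mono_on {lmin_pt w v..} (g w v)"
proof (rule strict_mono_onI)
  fix x y assume "x \<in> {lmin_pt w v..}" "y \<in> {lmin_pt w v..}" "x < y"
  show "g w v x < g w v y"
  proof (rule DERIV_pos_imp_increasing_open[OF \<open>x < y\<close> _ continuous_on_g])
    fix z assume "x < z" "z < y"
    then have "lmin_pt w v < z" using \<open>x \<in> _\<close> by simp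
    then have "crit_arg w < w * z + v"
      using assms compare_affine_div_iff(2) unfolding lmin_pt_def by simp
    then have "crit_arg w < \<bar>w * z + v\<bar>" by linarith
    then show "\<exists>l. DERIV (g w v) z :> l \<and> 0 < l"
      using g_has_real_derivative g_slope_pos_iff[OF assms] by blast
  qed
qed

lemma g_strict_antimono_on_between:
  assumes "w > 1"
  shows "strict_antimono_on {lmax_pt w v..lmin_pt w v} (g w v)"
proof (rule monotone_onI)
  fix x y assume "x \<in> {lmax_pt w v..lmin_pt w v}" "y \<in> {lmax_pt w v..lmin_pt w v}" "x < y"
  show "g w v y < g w v x"
  proof (rule DERIV_neg_imp_decreasing_open[OF \<open>x < y\<close> _ continuous_on_g])
    fix z assume "x < z" "z < y"
    then have "lmax_pt w v < z" "z < lmin_pt w v" using \<open>x \<in> _\<close> \<open>y \<in> _\<close> by auto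
    then have "- crit_arg w < w * z + v" "w * z + v < crit_arg w"
      using assms compare_affine_div_iff(1,2) unfolding lmax_pt_def lmin_pt_def by simp_all
    then have "\<bar>w * z + v\<bar> < crit_arg w" by linarith
    then show "\<exists>l. DERIV (g w v) z :> l \<and> l < 0"
      using g_has_real_derivative g_slope_neg_iff[OF assms] by blast
  qed
qed

lemma loc_max_pt_g_iff:
  assumes w: "w > 1"
  shows "loc_max_pt (g w v) x \<longleftrightarrow> x = lmax_pt w v"
proof
  assume x: "x = lmax_pt w v"
  have "g w v y \<le> g w v x" if "dist y x < lmin_pt w v - lmax_pt w v" for y
  proof (cases "y \<le> x")
    case True
    then show ?thesis
      using mono_onD[OF strict_mono_on_imp_mono_on[OF g_strict_mono_on_le_lmax_pt[OF w, of v]], of y x] x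
      by simp
  next
    case False
    then have "y \<in> {lmax_pt w v..lmin_pt w v}" using that x by (auto simp: dist_real_def)
    then show ?thesis using g_strict_antimono_on_between[OF w] x False
      by (auto simp: monotone_on_def intro: less_imp_le)
  qed
  then show "loc_max_pt (g w v) x"
    unfolding loc_max_pt_def using lmax_pt_less_lmin_pt[OF w] by (auto intro!: exI)
next
  assume "loc_max_pt (g w v) x"
  then obtain e where e: "e > 0" "\<And>y. dist y x < e \<Longrightarrow> g w v y \<le> g w v x"
    unfolding loc_max_pt_def by blast
  have "1 - w * (1 - tanh (w * x + v) ^ 2) = 0"
    by (rule DERIV_local_max[OF g_has_real_derivative e(1)])
      (use e(2) in \<open>auto simp: dist_real_def abs_minus_commute\<close>)
  then have "x = lmax_pt w v \<or> x = lmin_pt w v" using g_slope_eq_0_iff[OF w] by blast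
  moreover have "x \<noteq> lmin_pt w v"
  proof
    assume "x = lmin_pt w v"
    then have "g w v x < g w v (x + e / 2)"
      using g_strict_mono_on_ge_lmin_pt[OF w] e(1) by (auto simp: strict_mono_on_def)
    moreover have "g w v (x + e / 2) \<le> g w v x" using e by (auto simp: dist_real_def)
    ultimately show False by simp
  qed
  ultimately show "x = lmax_pt w v" by blast
qed

lemma loc_min_pt_g_iff:
  assumes w: "w > 1"
  shows "loc_min_pt (g w v) x \<longleftrightarrow> x = lmin_pt w v"
proof
  assume x: "x = lmin_pt w v"
  have "g w v x \<le> g w v y" if "dist y x < lmin_pt w v - lmax_pt w v" for y
  proof (cases "x \<le> y")
    case True
    then show ?thesis
      using mono_onD[OF strict_mono_on_imp_mono_on[OF g_strict_mono_on_ge_lmin_pt[OF w, of v]], of x y] x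
      by simp
  next
    case False
    then have "y \<in> {lmax_pt w v..lmin_pt w v}" using that x by (auto simp: dist_real_def)
    then show ?thesis using g_strict_antimono_on_between[OF w] x False
      by (auto simp: monotone_on_def intro: less_imp_le)
  qed
  then show "loc_min_pt (g w v) x"
    unfolding loc_min_pt_def using lmax_pt_less_lmin_pt[OF w] by (auto intro!: exI)
next
  assume "loc_min_pt (g w v) x"
  then obtain e where e: "e > 0" "\<And>y. dist y x < e \<Longrightarrow> g w v x \<le> g w v y"
    unfolding loc_min_pt_def by blast
  have "1 - w * (1 - tanh (w * x + v) ^ 2) = 0"
    by (rule DERIV_local_min[OF g_has_real_derivative e(1)])
      (use e(2) in \<open>auto simp: dist_real_def abs_minus_commute\<close>)
  then have "x = lmax_pt w v \<or> x = lmin_pt w v" using g_slope_eq_0_iff[OF w] by blast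
  moreover have "x \<noteq> lmax_pt w v"
  proof
    assume "x = lmax_pt w v"
    then have "g w v (x - e / 2) < g w v x"
      using g_strict_mono_on_le_lmax_pt[OF w] e(1) by (auto simp: strict_mono_on_def)
    moreover have "g w v x \<le> g w v (x - e / 2)" using e by (auto simp: dist_real_def)
    ultimately show False by simp
  qed
  ultimately show "x = lmin_pt w v" by blast
qed

lemma p_minus_v_eq: "w > 1 \<Longrightarrow> p_minus_v w v = lmax_pt w v"
  unfolding p_minus_v_def using loc_max_pt_g_iff by (intro the_equality) auto

lemma p_plus_v_eq: "w > 1 \<Longrightarrow> p_plus_v w v = lmin_pt w v"
  unfolding p_plus_v_def using loc_min_pt_g_iff by (intro the_equality) auto

lemma g_lmax_pt: "w > 1 \<Longrightarrow> g w v (lmax_pt w v) = lmax_pt w v + crit_val w"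
  unfolding g_def h_def lmax_pt_def by (simp add: tanh_crit_arg)

lemma g_lmin_pt: "w > 1 \<Longrightarrow> g w v (lmin_pt w v) = lmin_pt w v - crit_val w"
  unfolding g_def h_def lmin_pt_def by (simp add: tanh_crit_arg)

lemma g_p_minus_v_eq_0_iff:
  assumes "w > 1"
  shows "g w v (p_minus_v w v) = 0 \<longleftrightarrow> v = w * crit_val w - crit_arg w"
proof -
  have "g w v (p_minus_v w v) = 0 \<longleftrightarrow> lmax_pt w v + crit_val w = 0"
    using assms by (simp add: p_minus_v_eq g_lmax_pt)
  also have "\<dots> \<longleftrightarrow> v = w * crit_val w - crit_arg w"
    unfolding lmax_pt_def using assms by (simp add: field_simps) linarith
  finally show ?thesis .
qed

lemma g_p_plus_v_eq_0_iff:
  assumes "w > 1"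
  shows "g w v (p_plus_v w v) = 0 \<longleftrightarrow> v = crit_arg w - w * crit_val w"
proof -
  have "g w v (p_plus_v w v) = 0 \<longleftrightarrow> lmin_pt w v - crit_val w = 0"
    using assms by (simp add: p_plus_v_eq g_lmin_pt)
  also have "\<dots> \<longleftrightarrow> v = crit_arg w - w * crit_val w"
    unfolding lmin_pt_def using assms by (simp add: field_simps) linarith
  finally show ?thesis .
qed

lemma v_minus_eq: "w > 1 \<Longrightarrow> v_minus w = w * crit_val w - crit_arg w"
  unfolding v_minus_def by (rule the_equality) (simp_all add: g_p_minus_v_eq_0_iff)

lemma v_plus_eq: "w > 1 \<Longrightarrow> v_plus w = crit_arg w - w * crit_val w"
  unfolding v_plus_def by (rule the_equality) (simp_all add: g_p_plus_v_eq_0_iff)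

lemma pivot_minus_eq: "w > 1 \<Longrightarrow> pivot_minus w = - crit_val w"
  unfolding pivot_minus_def by (simp add: v_minus_eq p_minus_v_eq lmax_pt_def)

lemma pivot_plus_eq: "w > 1 \<Longrightarrow> pivot_plus w = crit_val w"
  unfolding pivot_plus_def by (simp add: v_plus_eq p_plus_v_eq lmin_pt_def)

subsection \<open>Fixpoints of h\<close>

lemma mem_fixpoints_iff: "x \<in> fixpoints w v \<longleftrightarrow> g w v x = 0"
  unfolding fixpoints_def g_def by auto

lemma mem_fixpoints_iff_tanh: "x \<in> fixpoints w v \<longleftrightarrow> tanh (w * x + v) = x"
  unfolding fixpoints_def h_def by (rule mem_Collect_eq)

lemma fixpoints_subset: "fixpoints w v \<subseteq> {-1<..<1}"
proof
  fix x assume "x \<in> fixpoints w v"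
  then have "tanh (w * x + v) = x" by (simp only: mem_fixpoints_iff_tanh)
  then show "x \<in> {-1<..<1}" using tanh_real_bounds[of "w * x + v"] by simp
qed

lemma g_bounds: "x - 1 < g w v x \<and> g w v x < x + 1"
  unfolding g_def h_def using tanh_real_lt_1[of "w * x + v"] tanh_real_gt_neg1[of "w * x + v"]
  by linarith

lemma fixpoint_le_lmax_pt_iff:
  assumes w: "w > 1" and x: "x \<in> fixpoints w v"
  shows "x \<le> lmax_pt w v \<longleftrightarrow> x \<le> - crit_val w"
proof -
  have "x \<le> lmax_pt w v \<longleftrightarrow> w * x + v \<le> - crit_arg w"
    using w compare_affine_div_iff(3) unfolding lmax_pt_def by simp
  also have "\<dots> \<longleftrightarrow> tanh (w * x + v) \<le> tanh (- crit_arg w)"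
    by (simp only: tanh_real_le_iff)
  also have "\<dots> \<longleftrightarrow> x \<le> - crit_val w"
    using w x unfolding mem_fixpoints_iff_tanh by (simp only: tanh_minus tanh_crit_arg)
  finally show ?thesis .
qed

lemma fixpoint_lmin_pt_le_iff:
  assumes w: "w > 1" and x: "x \<in> fixpoints w v"
  shows "lmin_pt w v \<le> x \<longleftrightarrow> crit_val w \<le> x"
proof -
  have "lmin_pt w v \<le> x \<longleftrightarrow> crit_arg w \<le> w * x + v"
    using w compare_affine_div_iff(4) unfolding lmin_pt_def by simp
  also have "\<dots> \<longleftrightarrow> tanh (crit_arg w) \<le> tanh (w * x + v)"
    by (simp only: tanh_real_le_iff)
  also have "\<dots> \<longleftrightarrow> crit_val w \<le> x"
    using w x unfolding mem_fixpoints_iff_tanh by (simp only: tanh_crit_arg)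
  finally show ?thesis .
qed

lemma fixpoints_nonempty: "fixpoints w v \<noteq> {}"
proof -
  have "g w v (-1) \<le> 0" "0 \<le> g w v 1"
    using g_bounds[of "-1" w v] g_bounds[of 1 w v] by auto
  then obtain x where "g w v x = 0"
    using IVT'[of "g w v" "-1" 0 1] continuous_on_g by auto
  then show ?thesis by (auto simp: mem_fixpoints_iff)
qed

lemma fixpoints_unique_le:
  assumes w: "w > 1" and "x \<in> fixpoints w v" "y \<in> fixpoints w v"
    and "x \<le> - crit_val w" "y \<le> - crit_val w"
  shows "x = y"
proof (rule inj_onD[OF strict_mono_on_imp_inj_on[OF g_strict_mono_on_le_lmax_pt[OF w]]])
  show "g w v x = g w v y" using assms by (simp add: mem_fixpoints_iff)
  show "x \<in> {..lmax_pt w v}" "y \<in> {..lmax_pt w v}"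
    using assms fixpoint_le_lmax_pt_iff[OF w] by simp_all
qed

lemma fixpoints_unique_ge:
  assumes w: "w > 1" and "x \<in> fixpoints w v" "y \<in> fixpoints w v"
    and "crit_val w \<le> x" "crit_val w \<le> y"
  shows "x = y"
proof (rule inj_onD[OF strict_mono_on_imp_inj_on[OF g_strict_mono_on_ge_lmin_pt[OF w]]])
  show "g w v x = g w v y" using assms by (simp add: mem_fixpoints_iff)
  show "x \<in> {lmin_pt w v..}" "y \<in> {lmin_pt w v..}"
    using assms fixpoint_lmin_pt_le_iff[OF w] by simp_all
qed

lemma fixpoint_between_pivots:
  assumes w: "w > 1" and x: "x \<in> fixpoints w v"
  shows "- crit_val w < x \<and> x < crit_val w \<longleftrightarrow> lmax_pt w v < x \<and> x < lmin_pt w v"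
  using fixpoint_le_lmax_pt_iff[OF assms] fixpoint_lmin_pt_le_iff[OF assms]
  by (simp only: not_le[symmetric])

lemma fixpoints_unique_between:
  assumes w: "w > 1" and "x \<in> fixpoints w v" "y \<in> fixpoints w v"
    and "- crit_val w < x" "x < crit_val w" "- crit_val w < y" "y < crit_val w"
  shows "x = y"
proof (rule inj_onD)
  show "inj_on (g w v) {lmax_pt w v..lmin_pt w v}"
    using g_strict_antimono_on_between[OF w] strict_antimono_iff_antimono by blast
  show "g w v x = g w v y" using assms by (simp add: mem_fixpoints_iff)
  show "x \<in> {lmax_pt w v..lmin_pt w v}" "y \<in> {lmax_pt w v..lmin_pt w v}"
    using fixpoint_between_pivots[OF w assms(2)] fixpoint_between_pivots[OF w assms(3)] assms(4-7)
    by auto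
qed

lemma fixpoint_le_exists:
  assumes w: "w > 1" and pos: "0 < g w v (lmax_pt w v)"
  shows "\<exists>y\<in>fixpoints w v. y \<le> - crit_val w"
proof -
  have "-1 \<le> lmax_pt w v" using pos g_bounds[of "lmax_pt w v" w v] by auto
  moreover have "g w v (-1) \<le> 0" using g_bounds[of "-1" w v] by auto
  ultimately obtain y where "y \<le> lmax_pt w v" "g w v y = 0"
    using IVT'[OF _ less_imp_le[OF pos] _ continuous_on_g] by blast
  then show ?thesis using fixpoint_le_lmax_pt_iff[OF w] by (auto simp: mem_fixpoints_iff)
qed

lemma fixpoint_ge_exists:
  assumes w: "w > 1" and neg: "g w v (lmin_pt w v) < 0"
  shows "\<exists>y\<in>fixpoints w v. crit_val w \<le> y"
proof -
  have "lmin_pt w v \<le> 1" using neg g_bounds[of "lmin_pt w v" w v] by auto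
  moreover have "0 \<le> g w v 1" using g_bounds[of 1 w v] by auto
  ultimately obtain y where "lmin_pt w v \<le> y" "g w v y = 0"
    using IVT'[OF less_imp_le[OF neg] _ _ continuous_on_g] by blast
  then show ?thesis using fixpoint_lmin_pt_le_iff[OF w] by (auto simp: mem_fixpoints_iff)
qed

lemma fixpoint_between_forces_outer:
  assumes w: "w > 1" and x: "x \<in> fixpoints w v" "- crit_val w < x" "x < crit_val w"
  shows "(\<exists>y\<in>fixpoints w v. y \<le> - crit_val w) \<and> (\<exists>y\<in>fixpoints w v. crit_val w \<le> y)"
proof -
  have between: "lmax_pt w v < x" "x < lmin_pt w v"
    using x fixpoint_between_pivots[OF w x(1)] by auto
  have "g w v x = 0" using x by (simp add: mem_fixpoints_iff)
  moreover have "g w v x < g w v (lmax_pt w v)" "g w v (lmin_pt w v) < g w v x"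
    using monotone_onD[OF g_strict_antimono_on_between[OF w, of v]] between less_imp_le by auto
  ultimately show ?thesis using fixpoint_le_exists[OF w] fixpoint_ge_exists[OF w] by simp
qed

theorem proposition10:
  fixes w v :: real
  assumes "w > 1"
  shows "finite (fixpoints w v)
    \<and> card (fixpoints w v) \<in> {1, 2, 3}
    \<and> fixpoints w v \<subseteq> {-1..1}
    \<and> (\<forall>x1. fixpoints w v = {x1} \<longrightarrow> x1 \<le> pivot_minus w \<or> pivot_plus w \<le> x1)
    \<and> (\<forall>x1 x3. fixpoints w v = {x1, x3} \<and> x1 < x3 \<longrightarrow>
          x1 \<le> pivot_minus w \<and> pivot_minus w < pivot_plus w \<and> pivot_plus w \<le> x3)
    \<and> (\<forall>x1 x2 x3. fixpoints w v = {x1, x2, x3} \<and> x1 < x2 \<and> x2 < x3 \<longrightarrow>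
          x1 \<le> pivot_minus w \<and> pivot_minus w < x2 \<and> x2 < pivot_plus w \<and> pivot_plus w \<le> x3)"
proof -
  let ?F = "fixpoints w v" and ?c = "crit_val w"
  have cuts: "- ?c < ?c" using crit_val_bounds[OF assms] by simp
  interpret middle_forces_outer ?F "- ?c" ?c
    by unfold_locales (fact fixpoints_unique_le[OF assms] fixpoints_unique_between[OF assms]
      fixpoints_unique_ge[OF assms] cuts fixpoint_between_forces_outer[OF assms])+
  have "card ?F \<in> {1, 2, 3}"
    using finite_card_le_3 fixpoints_nonempty[of w v] card_gt_0_iff[of ?F] by auto
  moreover have "?F \<subseteq> {-1..1}" using fixpoints_subset[of w v] by auto
  ultimately show ?thesis
    unfolding pivot_minus_eq[OF assms] pivot_plus_eq[OF assms]
    using finite_card_le_3 cuts singleton_position doubleton_position tripleton_position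
    by simp
qed

end
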